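(* For every admissible $i$, $K^i\subseteq Z^i$, where $Z^i=\{V_\bullet\in\mathrm{Fl}(1^n,s-1)\mid V_{i-1}\subseteq\mathrm{im}(x)\subseteq V_n\subseteq x^{-1}V_{i-1}\}$.
   Context: Fix integers $n\ge 2$ and $s\ge n-1$, let $N=n+s-1$, and let $e_1,\dots,e_N$ be the standard basis of $\mathbb{C}^N$. Let $x:\mathbb{C}^N\to\mathbb{C}^N$ be the linear map with $xe_m=e_{m-(n-1)}$ for $n\le m\le 2n-2$ and $xe_m=0$ otherwise; thus $\mathrm{im}(x)=\mathrm{span}(e_1,\dots,e_{n-1})$. $x^{-1}V$ denotes the preimage of a subspace $V$ under $x$. $\mathrm{Fl}(1^n,s-1)$ is the variety of partial flags $V_\bullet=(0=V_0\subset V_1\subset\cdots\subset V_n\subset\mathbb{C}^N)$ with $\dim V_j=j$. The $\Delta$-Springer fiber is $Y=\{V_\bullet\in\mathrm{Fl}(1^n,s-1)\mid \mathrm{im}(x)\subseteq V_n,\ xV_j\subseteq V_j \text{ for all } j\}$. For distinct $w_1,\dots,w_n\in\{1,\dots,N\}$, the Schubert cell $X_w^\circ$ is the set of flags with $\dim(V_j\cap\mathrm{span}(e_1,\dots,e_m))=\#\{l\le j: w_l\le m\}$ for all $j,m$. An index $i$ is admissible if $1\le i\le n$ when $s>n-1$, and $2\le i\le n$ when $s=n-1$. For admissible $i$ put $w^{(i)}=(n-1,n-2,\dots,n-i+1,\,N,\,n-i,\dots,1)$ and let $K^i$ be the closure in $Y$ of $X^\circ_{w^{(i)}}\cap Y$.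 *)

theory Defs
  imports Complex_Main "HOL-Library.Function_Algebras"
begin

text \<open>Vectors of C^N are modelled as functions nat => complex vanishing outside {1..N}.
  Coordinate k of v is v k; e_m is ebasis m.\<close>

definition csc :: "complex \<Rightarrow> (nat \<Rightarrow> complex) \<Rightarrow> (nat \<Rightarrow> complex)" where
  "csc c v = (\<lambda>k. c * v k)"

abbreviation cspan :: "(nat \<Rightarrow> complex) set \<Rightarrow> (nat \<Rightarrow> complex) set" where
  "cspan \<equiv> module.span csc"
abbreviation csubspace :: "(nat \<Rightarrow> complex) set \<Rightarrow> bool" where
  "csubspace \<equiv> module.subspace csc"
abbreviation cdependent :: "(nat \<Rightarrow> complex) set \<Rightarrow> bool" where
  "cdependent \<equiv> module.dependent csc"
abbreviation cdim :: "(nat \<Rightarrow> complex) set \<Rightarrow> nat" where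
  "cdim \<equiv> vector_space.dim csc"

definition bigN :: "nat \<Rightarrow> nat \<Rightarrow> nat" where
  "bigN n s = n + s - 1"

definition CN :: "nat \<Rightarrow> (nat \<Rightarrow> complex) set" where
  "CN N = {v. \<forall>k. k \<notin> {1..N} \<longrightarrow> v k = 0}"

definition ebasis :: "nat \<Rightarrow> nat \<Rightarrow> complex" where
  "ebasis m = (\<lambda>k. if k = m then 1 else 0)"

text \<open>The nilpotent map x: x e_m = e_(m-(n-1)) for n <= m <= 2n-2, x e_m = 0 otherwise.
  In coordinates: (x v)_k = v_(k+n-1) for 1 <= k <= n-1 and 0 otherwise.\<close>
definition xmap :: "nat \<Rightarrow> (nat \<Rightarrow> complex) \<Rightarrow> (nat \<Rightarrow> complex)" where
  "xmap n v = (\<lambda>k. if 1 \<le> k \<and> k \<le> n - 1 then v (k + (n - 1)) else 0)"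

definition im_x :: "nat \<Rightarrow> nat \<Rightarrow> (nat \<Rightarrow> complex) set" where
  "im_x n s = xmap n ` CN (bigN n s)"

definition xpre :: "nat \<Rightarrow> nat \<Rightarrow> (nat \<Rightarrow> complex) set \<Rightarrow> (nat \<Rightarrow> complex) set" where
  "xpre n s V = {v \<in> CN (bigN n s). xmap n v \<in> V}"

text \<open>A partial flag V_0 \<subset> ... \<subset> V_n in C^N is a function j \<mapsto> V j; by convention V j = {} for j > n.\<close>
definition Fl :: "nat \<Rightarrow> nat \<Rightarrow> (nat \<Rightarrow> (nat \<Rightarrow> complex) set) set" where
  "Fl n s = {V. (\<forall>j\<le>n. csubspace (V j) \<and> V j \<subseteq> CN (bigN n s) \<and> cdim (V j) = j)
              \<and> (\<forall>j<n. V j \<subseteq> V (Suc j)) \<and> (\<forall>j>n. V j = {})}"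

definition Yfib :: "nat \<Rightarrow> nat \<Rightarrow> (nat \<Rightarrow> (nat \<Rightarrow> complex) set) set" where
  "Yfib n s = {V \<in> Fl n s. im_x n s \<subseteq> V n \<and> (\<forall>j\<le>n. xmap n ` V j \<subseteq> V j)}"

definition schubert_cell :: "nat \<Rightarrow> nat \<Rightarrow> (nat \<Rightarrow> nat) \<Rightarrow> (nat \<Rightarrow> (nat \<Rightarrow> complex) set) set" where
  "schubert_cell n s w = {V \<in> Fl n s. \<forall>j\<le>n. \<forall>m\<le>bigN n s.
      cdim (V j \<inter> cspan (ebasis ` {1..m})) = card {l \<in> {1..j}. w l \<le> m}}"

definition wi :: "nat \<Rightarrow> nat \<Rightarrow> nat \<Rightarrow> nat \<Rightarrow> nat" where
  "wi n s i l = (if l < i then n - l else if l = i then bigN n s else n + 1 - l)"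

definition admissible :: "nat \<Rightarrow> nat \<Rightarrow> nat \<Rightarrow> bool" where
  "admissible n s i = ((s > n - 1 \<and> 1 \<le> i \<and> i \<le> n) \<or> (s = n - 1 \<and> 2 \<le> i \<and> i \<le> n))"

text \<open>Classical topology on the flag variety, via adapted bases: b_1..b_n linearly
  independent in C^N determine the flag V_j = span(b_1..b_j).\<close>
definition valid_basis :: "nat \<Rightarrow> nat \<Rightarrow> (nat \<Rightarrow> nat \<Rightarrow> complex) \<Rightarrow> bool" where
  "valid_basis n s b = ((\<forall>l\<in>{1..n}. b l \<in> CN (bigN n s)) \<and> inj_on b {1..n}
                        \<and> \<not> cdependent (b ` {1..n}))"

definition flag_of :: "nat \<Rightarrow> (nat \<Rightarrow> nat \<Rightarrow> complex) \<Rightarrow> nat \<Rightarrow> (nat \<Rightarrow> complex) set" where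
  "flag_of n b = (\<lambda>j. if j \<le> n then cspan (b ` {1..j}) else {})"

text \<open>Closure of S inside Y for the classical (analytic) topology of the flag variety:
  limits of sequences of flags in S, where convergence of flags means convergence of
  suitable adapted bases (the quotient map from adapted bases to flags is open).\<close>
definition closure_in_Y :: "nat \<Rightarrow> nat \<Rightarrow> (nat \<Rightarrow> (nat \<Rightarrow> complex) set) set
                              \<Rightarrow> (nat \<Rightarrow> (nat \<Rightarrow> complex) set) set" where
  "closure_in_Y n s S = {V \<in> Yfib n s. \<exists>b bk. valid_basis n s b \<and> flag_of n b = V
      \<and> (\<forall>k. valid_basis n s (bk k) \<and> flag_of n (bk k) \<in> S)
      \<and> (\<forall>l\<in>{1..n}. \<forall>c. (\<lambda>k. bk k l c) \<longlonglongrightarrow> b l c)}"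

definition Kcomp :: "nat \<Rightarrow> nat \<Rightarrow> nat \<Rightarrow> (nat \<Rightarrow> (nat \<Rightarrow> complex) set) set" where
  "Kcomp n s i = closure_in_Y n s (schubert_cell n s (wi n s i) \<inter> Yfib n s)"

definition Zcomp :: "nat \<Rightarrow> nat \<Rightarrow> nat \<Rightarrow> (nat \<Rightarrow> (nat \<Rightarrow> complex) set) set" where
  "Zcomp n s i = {V \<in> Fl n s. V (i - 1) \<subseteq> im_x n s \<and> im_x n s \<subseteq> V n
                   \<and> V n \<subseteq> xpre n s (V (i - 1))}"

end

theory Submission
  imports Defs
begin

text \<open>
  Let W be a flag in the cell of w^(i) inside Y and write C^m for span(e_1, ..., e_m).
  The rank conditions of the cell say dim (W_j \<inter> C^m) = j - [i \<le> j] for n - 1 \<le> m < N.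
  Comparing dimensions gives W_(i-1) \<subseteq> C^(n-1) = im x, W_(i-1) = W_i \<inter> C^(n-1) and
  W_n \<inter> C^(N-1) = im x, and W_i contains a vector v with v_N \<noteq> 0. As x vanishes on im x,
  every u \<in> W_n has x u \<in> span (x v) \<subseteq> W_i \<inter> im x = W_(i-1). So the cell meets Y inside Z^i,
  and it remains to see that both conditions pass to limits of adapted bases: the first
  coordinatewise, the second because a limit of vectors lying in the spans of convergent
  families with linearly independent limits lies in the span of the limit family.
\<close>

interpretation cv: vector_space csc
  by unfold_locales (auto simp: csc_def fun_eq_iff algebra_simps)

section \<open>Coordinate subspaces\<close>

lemma subspace_CN: "csubspace (CN m)"
  unfolding cv.subspace_def CN_def by (auto simp: csc_def zero_fun_def)

lemma ebasis_in_CN: "k \<in> {1..m} \<Longrightarrow> ebasis k \<in> CN m"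
  unfolding CN_def ebasis_def by auto

lemma span_ebasis: "cspan (ebasis ` {1..m}) = CN m"
proof
  show "cspan (ebasis ` {1..m}) \<subseteq> CN m"
    by (rule cv.span_minimal) (auto simp: subspace_CN ebasis_in_CN)
  show "CN m \<subseteq> cspan (ebasis ` {1..m})"
  proof (induction m)
    case 0
    have "CN 0 = {0}"
      by (auto simp: CN_def zero_fun_def)
    then show ?case by (simp add: cv.span_zero)
  next
    case (Suc m)
    show ?case
    proof
      fix v assume v: "v \<in> CN (Suc m)"
      have "v - csc (v (Suc m)) (ebasis (Suc m)) \<in> CN m"
        using v by (auto simp: CN_def ebasis_def csc_def)
      then have "v \<in> cspan (insert (ebasis (Suc m)) (ebasis ` {1..m}))"
        using Suc.IH by (auto simp: cv.span_insert)
      then show "v \<in> cspan (ebasis ` {1..Suc m})"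
        by (simp add: atLeastAtMostSuc_conv)
    qed
  qed
qed

lemma independent_ebasis: "\<not> cdependent (ebasis ` M)"
proof
  assume "cdependent (ebasis ` M)"
  then obtain k where "ebasis k \<in> cspan (ebasis ` M - {ebasis k})"
    by (auto simp: cv.dependent_def)
  moreover have "cspan (ebasis ` M - {ebasis k}) \<subseteq> {v. v k = 0}"
    by (rule cv.span_minimal) (auto simp: cv.subspace_def csc_def ebasis_def)
  ultimately show False
    by (auto simp: ebasis_def)
qed

lemma dim_CN: "cdim (CN m) = m"
proof -
  have "cdim (CN m) = card (ebasis ` {1..m})"
    by (metis span_ebasis cv.dim_span cv.dim_eq_card_independent independent_ebasis)
  moreover have "inj_on ebasis {1..m}"
    by (auto simp: inj_on_def ebasis_def fun_eq_iff)
  ultimately show ?thesis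
    by (simp add: card_image)
qed

lemma finite_independent_in_CN:
  assumes "\<not> cdependent B" and "B \<subseteq> CN m"
  shows "finite B"
  using cv.independent_span_bound[of "ebasis ` {1..m}" B] assms span_ebasis by auto

lemma subspace_dim_equal_CN:
  assumes U: "csubspace U" and T: "csubspace T" and UT: "U \<subseteq> T" and TC: "T \<subseteq> CN m"
    and dim: "cdim T \<le> cdim U"
  shows "U = T"
proof (rule ccontr)
  assume "U \<noteq> T"
  then obtain t where t: "t \<in> T" "t \<notin> U"
    using UT by auto
  obtain B where B: "B \<subseteq> U" "\<not> cdependent B" "U \<subseteq> cspan B" "card B = cdim U"
    using cv.basis_exists by blast
  obtain B' where B': "B' \<subseteq> T" "\<not> cdependent B'" "T \<subseteq> cspan B'" "card B' = cdim T"
    using cv.basis_exists by blast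
  have "finite B"
    using finite_independent_in_CN[of B m] B(1,2) UT TC by blast
  have "finite B'"
    using finite_independent_in_CN[of B' m] B'(1,2) TC by blast
  have "t \<notin> cspan B"
    using B U t cv.span_minimal by blast
  then have "\<not> cdependent (insert t B)"
    using B(2) cv.independent_insertI by blast
  moreover have "insert t B \<subseteq> cspan B'"
    using B' B UT t cv.span_superset by blast
  ultimately have "card (insert t B) \<le> card B'"
    using cv.independent_span_bound[OF \<open>finite B'\<close>] by blast
  moreover have "t \<notin> B"
    using t B by auto
  ultimately show False
    using \<open>finite B\<close> B B' dim by simp
qed

lemma CN_limit:
  assumes "\<And>k. v k \<in> CN m" and "\<And>x. (\<lambda>k. v k x) \<longlonglongrightarrow> v0 x"
  shows "v0 \<in> CN m"
  unfolding CN_def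
proof (intro CollectI allI impI)
  fix x assume "x \<notin> {1..m}"
  then have "(\<lambda>k. v k x) = (\<lambda>k. 0)"
    using assms(1) by (auto simp: CN_def)
  then have "(\<lambda>k. v k x) \<longlonglongrightarrow> 0"
    by simp
  then show "v0 x = 0"
    using assms(2) LIMSEQ_unique by blast
qed

lemma CN_pred:
  assumes "v \<in> CN m" and "v m = 0"
  shows "v \<in> CN (m - 1)"
proof -
  have "v k = 0" if "k \<notin> {1..m - 1}" for k
    using assms that by (cases "k = m") (auto simp: CN_def)
  then show ?thesis
    by (simp add: CN_def)
qed

lemma span_limit_subset_CN:
  assumes "\<And>k. cspan (A k ` J) \<subseteq> CN m" and "\<And>j x. j \<in> J \<Longrightarrow> (\<lambda>k. A k j x) \<longlonglongrightarrow> a j x"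
  shows "cspan (a ` J) \<subseteq> CN m"
proof (rule cv.span_minimal[OF image_subsetI subspace_CN])
  fix j assume j: "j \<in> J"
  show "a j \<in> CN m"
  proof (rule CN_limit)
    show "A k j \<in> CN m" for k
      using assms(1)[of k] cv.span_base[of "A k j" "A k ` J"] j by blast
    show "(\<lambda>k. A k j x) \<longlonglongrightarrow> a j x" for x
      using assms(2) j .
  qed
qed

section \<open>Limits of spans\<close>

definition eliminate :: "(nat \<Rightarrow> complex) \<Rightarrow> nat \<Rightarrow> (nat \<Rightarrow> complex) \<Rightarrow> nat \<Rightarrow> complex" where
  "eliminate w p v = v - csc (v p / w p) w"

lemma eliminate_apply: "eliminate w p v x = v x - v p / w p * w x"
  by (simp add: eliminate_def csc_def)

lemma module_hom_eliminate: "module_hom csc csc (eliminate w p)"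
  by unfold_locales (auto simp: eliminate_def csc_def fun_eq_iff algebra_simps add_divide_distrib)

lemma eliminate_self: "w p \<noteq> 0 \<Longrightarrow> eliminate w p w = 0"
  by (simp add: eliminate_def fun_eq_iff)

lemma inj_on_span_eliminate:
  assumes "w \<notin> cspan S"
  shows "inj_on (eliminate w p) (cspan S)"
  unfolding module_hom.inj_on_iff_eq_0[OF module_hom_eliminate cv.subspace_span]
proof (intro ballI impI)
  fix v assume v: "v \<in> cspan S" and "eliminate w p v = 0"
  define c where "c = v p / w p"
  have v_eq: "v = csc c w"
    using \<open>eliminate w p v = 0\<close> by (simp add: eliminate_def c_def)
  show "v = 0"
  proof (cases "c = 0")
    case True
    then show ?thesis using v_eq by simp
  next
    case False
    then have "w = csc (1 / c) v"
      using v_eq by (simp add: cv.scale_scale)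
    then have "w \<in> cspan S"
      using v by (simp add: cv.span_scale)
    then show ?thesis using assms by contradiction
  qed
qed

lemma independent_eliminate:
  assumes "w \<notin> cspan (a ` J)" and "inj_on a J" and "\<not> cdependent (a ` J)"
  shows "inj_on (\<lambda>j. eliminate w p (a j)) J"
    and "\<not> cdependent ((\<lambda>j. eliminate w p (a j)) ` J)"
proof -
  have inj: "inj_on (eliminate w p) (cspan (a ` J))"
    using assms(1) by (rule inj_on_span_eliminate)
  then have "inj_on (eliminate w p) (a ` J)"
    using cv.span_superset by (rule inj_on_subset)
  then show "inj_on (\<lambda>j. eliminate w p (a j)) J"
    using comp_inj_on[OF assms(2)] by (simp add: comp_def)
  show "\<not> cdependent ((\<lambda>j. eliminate w p (a j)) ` J)"
    using module_hom.independent_injective_image[OF module_hom_eliminate assms(3) inj]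
    by (simp add: image_image)
qed

lemma mem_span_insert_iff_eliminate:
  assumes "w p \<noteq> 0"
  shows "u \<in> cspan (insert w S) \<longleftrightarrow> eliminate w p u \<in> cspan (eliminate w p ` S)"
proof
  assume "u \<in> cspan (insert w S)"
  then have "eliminate w p u \<in> eliminate w p ` cspan (insert w S)"
    by blast
  also have "\<dots> = cspan (eliminate w p ` insert w S)"
    by (simp only: module_hom.span_image[OF module_hom_eliminate])
  also have "\<dots> = cspan (eliminate w p ` S)"
    by (simp only: image_insert eliminate_self[of w p, OF assms] cv.span_insert_0)
  finally show "eliminate w p u \<in> cspan (eliminate w p ` S)" .
next
  assume "eliminate w p u \<in> cspan (eliminate w p ` S)"
  moreover have "cspan (eliminate w p ` S) \<subseteq> cspan (insert w S)"
  proof (rule cv.span_minimal[OF image_subsetI cv.subspace_span])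
    fix v assume "v \<in> S"
    then show "eliminate w p v \<in> cspan (insert w S)"
      unfolding eliminate_def by (intro cv.span_diff cv.span_scale cv.span_base) auto
  qed
  ultimately have "eliminate w p u + csc (u p / w p) w \<in> cspan (insert w S)"
    by (auto intro: cv.span_add cv.span_scale cv.span_base)
  then show "u \<in> cspan (insert w S)"
    by (simp add: eliminate_def)
qed

lemma eliminate_tendsto:
  assumes "\<And>x. (\<lambda>k. w k x) \<longlonglongrightarrow> w0 x" and "w0 p \<noteq> 0"
    and "\<And>x. (\<lambda>k. v k x) \<longlonglongrightarrow> v0 x"
  shows "(\<lambda>k. eliminate (w k) p (v k) x) \<longlonglongrightarrow> eliminate w0 p v0 x"
  unfolding eliminate_apply using assms by (intro tendsto_intros) auto

text \<open>
  Induction on J: Gaussian elimination at a coordinate p with a r p \<noteq> 0 removes the vector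
  a r from the family; since A k r p \<noteq> 0 eventually, elimination commutes with the limit and
  preserves the independence of the remaining limit vectors.
\<close>
lemma span_limit:
  fixes A :: "nat \<Rightarrow> 'j \<Rightarrow> nat \<Rightarrow> complex"
  assumes "finite J" and "inj_on a J" and "\<not> cdependent (a ` J)"
    and "\<And>j x. j \<in> J \<Longrightarrow> (\<lambda>k. A k j x) \<longlonglongrightarrow> a j x"
    and "\<And>x. (\<lambda>k. u k x) \<longlonglongrightarrow> u0 x"
    and "\<forall>\<^sub>F k in sequentially. u k \<in> cspan (A k ` J)"
  shows "u0 \<in> cspan (a ` J)"
  using assms
proof (induction J arbitrary: A a u u0 rule: finite_induct)
  case empty
  have "u0 x = 0" for x
  proof -
    have "\<forall>\<^sub>F k in sequentially. u k x = 0"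
      using empty.prems(5) by eventually_elim (simp add: cv.span_empty)
    then have "(\<lambda>k. u k x) \<longlonglongrightarrow> 0"
      by (rule tendsto_eventually)
    then show ?thesis
      using empty.prems(4) LIMSEQ_unique by blast
  qed
  then show ?case
    by (simp add: fun_eq_iff zero_fun_def cv.span_zero)
next
  case (insert r J)
  have "a r \<notin> a ` J"
    using insert.hyps(2) insert.prems(1) by (auto simp: inj_on_def)
  then have ar: "a r \<notin> cspan (a ` J)" and indep: "\<not> cdependent (a ` J)"
    using insert.prems(2) by (auto simp: cv.independent_insert)
  then obtain p where p: "a r p \<noteq> 0"
    using cv.span_zero by (metis zero_fun_def ext)
  have pivot: "\<And>x. (\<lambda>k. A k r x) \<longlonglongrightarrow> a r x"
    using insert.prems(3) by simp
  define f where "f k = eliminate (A k r) p" for k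
  have "eliminate (a r) p u0 \<in> cspan ((\<lambda>j. eliminate (a r) p (a j)) ` J)"
  proof (rule insert.IH[where A = "\<lambda>k j. f k (A k j)" and u = "\<lambda>k. f k (u k)"])
    show "inj_on (\<lambda>j. eliminate (a r) p (a j)) J"
      and "\<not> cdependent ((\<lambda>j. eliminate (a r) p (a j)) ` J)"
      using independent_eliminate[OF ar _ indep] insert.prems(1) by auto
    show "(\<lambda>k. f k (A k j) x) \<longlonglongrightarrow> eliminate (a r) p (a j) x" if "j \<in> J" for j x
      unfolding f_def using pivot p insert.prems(3) that by (intro eliminate_tendsto) auto
    show "(\<lambda>k. f k (u k) x) \<longlonglongrightarrow> eliminate (a r) p u0 x" for x
      unfolding f_def using pivot p insert.prems(4) by (intro eliminate_tendsto) auto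
    have "\<forall>\<^sub>F k in sequentially. A k r p \<noteq> 0"
      using pivot p by (rule tendsto_imp_eventually_ne)
    then show "\<forall>\<^sub>F k in sequentially. f k (u k) \<in> cspan ((\<lambda>j. f k (A k j)) ` J)"
      using insert.prems(5)
      by eventually_elim (simp add: f_def image_image mem_span_insert_iff_eliminate)
  qed
  then show ?case
    using mem_span_insert_iff_eliminate[of "a r" p, OF p] by (simp add: image_image)
qed

section \<open>The nilpotent map and limits of flags\<close>

lemma module_hom_xmap: "module_hom csc csc (xmap n)"
  by unfold_locales (simp_all add: xmap_def csc_def fun_eq_iff)

lemma xmap_in_CN: "xmap n v \<in> CN (n - 1)"
  by (auto simp: xmap_def CN_def)

lemma xmap_CN_eq_0:
  assumes "w \<in> CN (n - 1)"
  shows "xmap n w = 0"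
proof
  fix k
  show "xmap n w k = 0 k"
  proof (cases "1 \<le> k \<and> k \<le> n - 1")
    case True
    then have "k + (n - 1) \<notin> {1..n - 1}"
      by auto
    then show ?thesis
      using assms True by (simp add: xmap_def CN_def)
  qed (auto simp: xmap_def)
qed

lemma xmap_tendsto:
  assumes "\<And>y. (\<lambda>k. v k y) \<longlonglongrightarrow> v0 y"
  shows "(\<lambda>k. xmap n (v k) x) \<longlonglongrightarrow> xmap n v0 x"
proof (cases "1 \<le> x \<and> x \<le> n - 1")
  case True
  then show ?thesis
    using assms by (simp add: xmap_def)
next
  case False
  then show ?thesis
    unfolding xmap_def if_not_P[OF False] by simp
qed

lemma im_x_eq_CN:
  assumes "n \<ge> 2" and "s \<ge> n - 1"
  shows "im_x n s = CN (n - 1)"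
proof
  show "im_x n s \<subseteq> CN (n - 1)"
    unfolding im_x_def using xmap_in_CN by auto
  show "CN (n - 1) \<subseteq> im_x n s"
  proof
    fix v assume v: "v \<in> CN (n - 1)"
    define w where "w k = (if n \<le> k \<and> k \<le> 2 * n - 2 then v (k - (n - 1)) else 0)" for k
    have "w \<in> CN (bigN n s)"
      using assms by (auto simp: w_def CN_def bigN_def)
    moreover have "xmap n w = v"
    proof
      fix k
      show "xmap n w k = v k"
        using v assms by (auto simp: xmap_def w_def CN_def)
    qed
    ultimately show "v \<in> im_x n s"
      unfolding im_x_def by blast
  qed
qed

lemma Fl_mono:
  assumes "V \<in> Fl n s" and "j \<le> j'" and "j' \<le> n"
  shows "V j \<subseteq> V j'"
  using assms(2,3)
proof (induction j' rule: dec_induct)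
  case (step m)
  then have "V m \<subseteq> V (Suc m)"
    using assms(1) by (simp add: Fl_def)
  with step show ?case
    by auto
qed simp

lemma FlD:
  assumes "V \<in> Fl n s" and "j \<le> n"
  shows "csubspace (V j)" and "V j \<subseteq> CN (bigN n s)" and "cdim (V j) = j"
  using assms by (auto simp: Fl_def)

lemma flag_of_eq_span: "j \<le> n \<Longrightarrow> flag_of n b j = cspan (b ` {1..j})"
  by (simp add: flag_of_def)

lemma flag_limit_subset_CN:
  assumes "j \<le> n" and "\<And>k. flag_of n (bk k) j \<subseteq> CN m"
    and "\<And>l x. l \<in> {1..n} \<Longrightarrow> (\<lambda>k. bk k l x) \<longlonglongrightarrow> b l x"
  shows "flag_of n b j \<subseteq> CN m"
  unfolding flag_of_eq_span[OF assms(1)]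
proof (rule span_limit_subset_CN[where A = bk])
  show "cspan (bk k ` {1..j}) \<subseteq> CN m" for k
    using assms(2) unfolding flag_of_eq_span[OF assms(1)] .
  show "(\<lambda>k. bk k l x) \<longlonglongrightarrow> b l x" if "l \<in> {1..j}" for l x
    using assms(1) that by (intro assms(3)) simp
qed

lemma flag_limit_xmap:
  assumes "j \<le> n" and b: "valid_basis n s b"
    and bk: "\<And>k. xmap n ` flag_of n (bk k) n \<subseteq> flag_of n (bk k) j"
    and lim: "\<And>l x. l \<in> {1..n} \<Longrightarrow> (\<lambda>k. bk k l x) \<longlonglongrightarrow> b l x"
  shows "xmap n ` flag_of n b n \<subseteq> flag_of n b j"
proof -
  note flag_j = flag_of_eq_span[OF assms(1)] and flag_n = flag_of_eq_span[OF order.refl]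
  have sub: "{1..j} \<subseteq> {1..n}"
    using assms(1) by auto
  have "xmap n (b l) \<in> cspan (b ` {1..j})" if l: "l \<in> {1..n}" for l
  proof (rule span_limit[where A = bk and u = "\<lambda>k. xmap n (bk k l)"])
    show "inj_on b {1..j}" and "\<not> cdependent (b ` {1..j})"
      using b sub cv.independent_mono[OF _ image_mono[OF sub]]
      by (auto simp: valid_basis_def intro: inj_on_subset)
    show "(\<lambda>k. bk k j' x) \<longlonglongrightarrow> b j' x" if "j' \<in> {1..j}" for j' x
      using lim sub that by blast
    show "(\<lambda>k. xmap n (bk k l) x) \<longlonglongrightarrow> xmap n (b l) x" for x
      using lim[OF l] by (rule xmap_tendsto)
    have "bk k l \<in> flag_of n (bk k) n" for k
      unfolding flag_n using l by (intro cv.span_base imageI)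
    then have "xmap n (bk k l) \<in> cspan (bk k ` {1..j})" for k
      using bk[of k] unfolding flag_j by blast
    then show "\<forall>\<^sub>F k in sequentially. xmap n (bk k l) \<in> cspan (bk k ` {1..j})"
      by (simp add: always_eventually)
  qed simp
  then have "cspan (b ` {1..n}) \<subseteq> xmap n -` cspan (b ` {1..j})"
    by (intro cv.span_minimal module_hom.subspace_vimage[OF module_hom_xmap] cv.subspace_span) auto
  then show ?thesis
    unfolding flag_j flag_n by (simp add: image_subset_iff_subset_vimage)
qed

section \<open>The Schubert cell of w^(i)\<close>

lemma le_bigN: "n \<ge> 2 \<Longrightarrow> s \<ge> n - 1 \<Longrightarrow> n \<le> bigN n s"
  by (simp add: bigN_def)

lemma wi_le_iff:
  assumes "n \<ge> 2" and "s \<ge> n - 1" and "1 \<le> i" and "l \<in> {1..n}"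
    and "n - 1 \<le> m" and "m < bigN n s"
  shows "wi n s i l \<le> m \<longleftrightarrow> l \<noteq> i"
  using assms by (auto simp: wi_def bigN_def)

lemma card_wi_le:
  assumes "n \<ge> 2" and "s \<ge> n - 1" and "1 \<le> i" and "j \<le> n"
    and "n - 1 \<le> m" and "m < bigN n s"
  shows "card {l \<in> {1..j}. wi n s i l \<le> m} = (if i \<le> j then j - 1 else j)"
proof -
  have "{l \<in> {1..j}. wi n s i l \<le> m} = {1..j} - {i}"
    using wi_le_iff[OF assms(1-3) _ assms(5,6)] assms(4) by auto
  then show ?thesis
    using assms(3) by simp
qed

context
  fixes n s i :: nat and W :: "nat \<Rightarrow> (nat \<Rightarrow> complex) set"
  assumes n: "n \<ge> 2" and s: "s \<ge> n - 1" and i: "1 \<le> i" "i \<le> n"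
    and cell: "W \<in> schubert_cell n s (wi n s i)" and Y: "W \<in> Yfib n s"
begin

lemma cell_Fl: "W \<in> Fl n s"
  using Y by (simp add: Yfib_def)

lemma cell_dim_inter_CN:
  assumes "j \<le> n" and "n - 1 \<le> m" and "m < bigN n s"
  shows "cdim (W j \<inter> CN m) = (if i \<le> j then j - 1 else j)"
proof -
  have "cdim (W j \<inter> cspan (ebasis ` {1..m})) = card {l \<in> {1..j}. wi n s i l \<le> m}"
    using cell assms unfolding schubert_cell_def by auto
  then show ?thesis
    unfolding span_ebasis card_wi_le[OF n s i(1) assms] .
qed

lemma cell_first_subset_CN: "W (i - 1) \<subseteq> CN (n - 1)"
proof -
  have "W (i - 1) \<inter> CN (n - 1) = W (i - 1)"
  proof (rule subspace_dim_equal_CN[where m = "bigN n s"])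
    show "cdim (W (i - 1)) \<le> cdim (W (i - 1) \<inter> CN (n - 1))"
      using cell_dim_inter_CN[of "i - 1" "n - 1"] FlD(3)[OF cell_Fl, of "i - 1"] i le_bigN[OF n s] n
      by simp
  qed (use FlD[OF cell_Fl, of "i - 1"] i subspace_CN in \<open>auto intro: cv.subspace_inter\<close>)
  then show ?thesis
    by blast
qed

lemma cell_first_eq: "W (i - 1) = W i \<inter> CN (n - 1)"
proof (rule subspace_dim_equal_CN[where m = "bigN n s"])
  show "W (i - 1) \<subseteq> W i \<inter> CN (n - 1)"
    using cell_first_subset_CN Fl_mono[OF cell_Fl, of "i - 1" i] i by auto
  show "cdim (W i \<inter> CN (n - 1)) \<le> cdim (W (i - 1))"
    using cell_dim_inter_CN[of i "n - 1"] FlD(3)[OF cell_Fl, of "i - 1"] i le_bigN[OF n s] n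
    by simp
qed (use FlD[OF cell_Fl] i subspace_CN in \<open>auto intro: cv.subspace_inter\<close>)

lemma cell_last_coord:
  obtains v where "v \<in> W i" and "v (bigN n s) \<noteq> 0"
proof (rule ccontr)
  assume "\<not> thesis"
  with that have "W i \<subseteq> CN (bigN n s - 1)"
    using FlD(2)[OF cell_Fl] i CN_pred by blast
  then have "cdim (W i \<inter> CN (bigN n s - 1)) = i"
    using FlD(3)[OF cell_Fl] i by (simp add: Int_absorb2)
  moreover have "cdim (W i \<inter> CN (bigN n s - 1)) = i - 1"
    using cell_dim_inter_CN[of i "bigN n s - 1"] i le_bigN[OF n s] n by simp
  ultimately show False
    using i by simp
qed

lemma cell_top_inter_CN: "CN (n - 1) = W n \<inter> CN (bigN n s - 1)"
proof (rule subspace_dim_equal_CN[where m = "bigN n s"])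
  show "CN (n - 1) \<subseteq> W n \<inter> CN (bigN n s - 1)"
    using Y im_x_eq_CN[OF n s] le_bigN[OF n s] by (auto simp: Yfib_def CN_def)
  show "cdim (W n \<inter> CN (bigN n s - 1)) \<le> cdim (CN (n - 1))"
    using cell_dim_inter_CN[of n "bigN n s - 1"] i le_bigN[OF n s] n by (simp add: dim_CN)
qed (use FlD[OF cell_Fl] subspace_CN in \<open>auto intro: cv.subspace_inter\<close>)

lemma cell_xmap_top: "xmap n ` W n \<subseteq> W (i - 1)"
proof (rule image_subsetI)
  fix u assume u: "u \<in> W n"
  obtain v where v: "v \<in> W i" "v (bigN n s) \<noteq> 0"
    using cell_last_coord .
  have "xmap n v \<in> W i"
    using Y v(1) i by (auto simp: Yfib_def)
  then have xv: "xmap n v \<in> W (i - 1)"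
    using cell_first_eq xmap_in_CN by blast
  define c where "c = u (bigN n s) / v (bigN n s)"
  have "v \<in> W n"
    using Fl_mono[OF cell_Fl, of i n] i v(1) by auto
  then have "u - csc c v \<in> W n"
    using FlD(1)[OF cell_Fl] u by (simp add: cv.subspace_diff cv.subspace_scale)
  moreover have "(u - csc c v) (bigN n s) = 0"
    using v(2) by (simp add: c_def csc_def)
  ultimately have "u - csc c v \<in> CN (n - 1)"
    using cell_top_inter_CN FlD(2)[OF cell_Fl] CN_pred by blast
  then have "xmap n u = csc c (xmap n v)"
    using xmap_CN_eq_0 module_hom.diff[OF module_hom_xmap] module_hom.scale[OF module_hom_xmap]
    by (metis eq_iff_diff_eq_0)
  then show "xmap n u \<in> W (i - 1)"
    using xv FlD(1)[OF cell_Fl] i by (simp add: cv.subspace_scale)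
qed

end

theorem proposition3p5:
  fixes n s i :: nat
  assumes "n \<ge> 2" and "s \<ge> n - 1" and "admissible n s i"
  shows "Kcomp n s i \<subseteq> Zcomp n s i"
proof
  fix V assume "V \<in> Kcomp n s i"
  then obtain b bk where V: "V \<in> Yfib n s" "flag_of n b = V" and b: "valid_basis n s b"
    and bk: "\<And>k. flag_of n (bk k) \<in> schubert_cell n s (wi n s i) \<inter> Yfib n s"
    and lim: "\<And>l x. l \<in> {1..n} \<Longrightarrow> (\<lambda>k. bk k l x) \<longlonglongrightarrow> b l x"
    unfolding Kcomp_def closure_in_Y_def by blast
  have i: "1 \<le> i" "i \<le> n"
    using assms(3) by (auto simp: admissible_def)
  note cell = assms(1,2) i bk[THEN IntD1] bk[THEN IntD2]
  have "V (i - 1) \<subseteq> CN (n - 1)"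
    using flag_limit_subset_CN[OF _ cell_first_subset_CN[OF cell] lim] i V(2) by simp
  moreover have "xmap n ` V n \<subseteq> V (i - 1)"
    using flag_limit_xmap[OF _ b cell_xmap_top[OF cell] lim] i V(2) by simp
  moreover have "V \<in> Fl n s" and "im_x n s \<subseteq> V n"
    using V(1) by (auto simp: Yfib_def)
  ultimately show "V \<in> Zcomp n s i"
    using FlD(2)[of V n s n] im_x_eq_CN[OF assms(1,2)]
    by (auto simp: Zcomp_def xpre_def)
qed

end
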